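(* Let $G$ be a word-representable graph and $n\ge 2$. Then $l(G \circ K_n) \le n\,l(G) + (n-1)\kappa_G$, where $\kappa_G$ is the size of a maximum clique of $G$.
   Context: All graphs are simple and undirected; $K_n$ is the complete graph on $n$ vertices, rooted at one of its vertices. Letters $x,y$ alternate in a word $w$ if deleting all other letters from $w$ yields $xyxy\ldots$ or $yxyx\ldots$ (of either parity). A word $w$ over $V(G)$ represents $G$ if every vertex occurs in $w$ and for all distinct $x,y$, $xy\in E(G)$ iff $x,y$ alternate in $w$; $G$ is word-representable if such a word exists, and $l(G)$ is the minimum length of a word representing $G$. For a graph $G$ and a rooted graph $H$, the rooted product $G\circ H$ is obtained by taking $|V(G)|$ disjoint copies of $H$, one for each vertex $v$ of $G$, and identifying each vertex $v$ of $G$ with the root of its copy of $H$. *)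

theory Defs
  imports Main
begin

definition simple_graph :: "'a set \<Rightarrow> ('a \<Rightarrow> 'a \<Rightarrow> bool) \<Rightarrow> bool" where
  "simple_graph V E \<longleftrightarrow> finite V \<and>
     (\<forall>x y. E x y \<longrightarrow> x \<in> V \<and> y \<in> V \<and> x \<noteq> y \<and> E y x)"

definition alternate :: "'a list \<Rightarrow> 'a \<Rightarrow> 'a \<Rightarrow> bool" where
  "alternate w x y \<longleftrightarrow>
     (let u = filter (\<lambda>z. z = x \<or> z = y) w in
      \<forall>i. Suc i < length u \<longrightarrow> u ! i \<noteq> u ! Suc i)"

definition represents :: "'a set \<Rightarrow> ('a \<Rightarrow> 'a \<Rightarrow> bool) \<Rightarrow> 'a list \<Rightarrow> bool" where
  "represents V E w \<longleftrightarrow> set w = V \<and>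
     (\<forall>x\<in>V. \<forall>y\<in>V. x \<noteq> y \<longrightarrow> (E x y \<longleftrightarrow> alternate w x y))"

definition word_representable :: "'a set \<Rightarrow> ('a \<Rightarrow> 'a \<Rightarrow> bool) \<Rightarrow> bool" where
  "word_representable V E \<longleftrightarrow> (\<exists>w. represents V E w)"

definition min_rep_length :: "'a set \<Rightarrow> ('a \<Rightarrow> 'a \<Rightarrow> bool) \<Rightarrow> nat" where
  "min_rep_length V E = (LEAST k. \<exists>w. represents V E w \<and> length w = k)"

definition is_clique :: "'a set \<Rightarrow> ('a \<Rightarrow> 'a \<Rightarrow> bool) \<Rightarrow> 'a set \<Rightarrow> bool" where
  "is_clique V E C \<longleftrightarrow> C \<subseteq> V \<and> (\<forall>x\<in>C. \<forall>y\<in>C. x \<noteq> y \<longrightarrow> E x y)"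

definition clique_number :: "'a set \<Rightarrow> ('a \<Rightarrow> 'a \<Rightarrow> bool) \<Rightarrow> nat" where
  "clique_number V E = Max (card ` {C. is_clique V E C})"

text \<open>Rooted product G \<circ> K_n: the copy of K_n at v has vertices (v,0),...,(v,n-1),
  with root (v,0) identified with v.\<close>
definition rp_verts :: "'a set \<Rightarrow> nat \<Rightarrow> ('a \<times> nat) set" where
  "rp_verts V n = V \<times> {0..<n}"

definition rp_edge :: "('a \<Rightarrow> 'a \<Rightarrow> bool) \<Rightarrow> ('a \<times> nat) \<Rightarrow> ('a \<times> nat) \<Rightarrow> bool" where
  "rp_edge E p q \<longleftrightarrow>
     (snd p = 0 \<and> snd q = 0 \<and> E (fst p) (fst q)) \<or> (fst p = fst q \<and> snd p \<noteq> snd q)"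

end

theory Submission imports Defs begin

(* Take a shortest word w representing G and let L_x = (x,1) (x,2) ... (x,n-1) list the non-root
   vertices of the copy of K_n at x. Replace the first occurrence of each letter x of w by
   L_x x L_x, its last occurrence (if it is not also the first) by x, and every other occurrence
   by x L_x. Deleting the non-root vertices gives back w, so the roots induce G. Restricted to the
   copy at x the new word is a prefix of a power of L_x x, so the vertices of one copy pairwise
   alternate; and a non-root vertex (x,i) occurs twice inside the block L_x x L_x, so it
   alternates with no vertex outside its copy. A letter occurring k >= 2 times in w contributes
   k n letters and one occurring once contributes 2n - 1; the letters occurring once in w
   pairwise alternate, so there are at most kappa_G of them. *)

lemma alternate_iff_distinct_adj:
  "alternate w x y \<longleftrightarrow> distinct_adj (filter (\<lambda>z. z = x \<or> z = y) w)"
  unfolding alternate_def distinct_adj_conv_nth Let_def by simp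

lemma alternate_commute: "alternate w x y \<longleftrightarrow> alternate w y x"
proof -
  have "(\<lambda>z. z = x \<or> z = y) = (\<lambda>z. z = y \<or> z = x)" by auto
  then show ?thesis unfolding alternate_iff_distinct_adj by simp
qed

lemma alternate_filter:
  assumes "P x" "P y"
  shows "alternate (filter P w) x y \<longleftrightarrow> alternate w x y"
proof -
  have "filter (\<lambda>z. z = x \<or> z = y) (filter P w) = filter (\<lambda>z. z = x \<or> z = y) w"
    using assms by (induction w) auto
  then show ?thesis unfolding alternate_iff_distinct_adj by simp
qed

lemma alternate_map:
  assumes "inj f"
  shows "alternate (map f w) (f x) (f y) \<longleftrightarrow> alternate w x y"
proof -
  have "filter (\<lambda>z. z = f x \<or> z = f y) (map f w) = map f (filter (\<lambda>z. z = x \<or> z = y) w)"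
    using assms by (simp add: filter_map comp_def inj_eq)
  then show ?thesis
    unfolding alternate_iff_distinct_adj using assms by (simp add: distinct_adj_map_iff inj_on_subset)
qed

lemma alternate_appendD1: "alternate (xs @ ys) x y \<Longrightarrow> alternate xs x y"
  unfolding alternate_iff_distinct_adj by auto

lemma not_alternate_if_none_between:
  assumes "y \<notin> set ys" "x \<noteq> y"
  shows "\<not> alternate (xs @ x # ys @ x # zs) x y"
proof -
  have "filter (\<lambda>z. z = x \<or> z = y) ys = replicate (count_list ys x) x"
    using assms(1) by (induction ys) auto
  then show ?thesis
    unfolding alternate_iff_distinct_adj by (cases "count_list ys x") (auto simp: distinct_adj_append_iff)
qed

lemma distinct_adj_if_distinct: "distinct xs \<Longrightarrow> distinct_adj xs"
  by (induction xs rule: induct_list012) auto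

lemma distinct_adj_concat_replicate:
  assumes "distinct xs" "length xs \<noteq> 1"
  shows "distinct_adj (concat (replicate k xs))"
proof (induction k)
  case (Suc k)
  have last_hd: "last xs \<noteq> hd xs" if "xs \<noteq> []"
  proof (cases xs)
    case (Cons a ys)
    with that assms(2) have "ys \<noteq> []" by auto
    with Cons assms(1) show ?thesis by (auto dest: last_in_set)
  qed (use that in simp)
  have "hd (concat (replicate k xs)) = hd xs" if "concat (replicate k xs) \<noteq> []"
    using that by (cases k) auto
  then show ?case
    using Suc distinct_adj_if_distinct[OF assms(1)] last_hd by (auto simp: distinct_adj_append_iff)
qed simp

lemma alternate_concat_replicate:
  assumes "distinct xs" "x \<in> set xs" "y \<in> set xs" "x \<noteq> y"
  shows "alternate (concat (replicate k xs)) x y"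
proof -
  let ?ys = "filter (\<lambda>z. z = x \<or> z = y) xs"
  have "set ?ys = {x, y}" using assms(2,3) by auto
  then have "length ?ys = 2"
    using assms(1,4) distinct_card[of ?ys] by simp
  then have "distinct_adj (concat (replicate k ?ys))"
    using assms(1) by (intro distinct_adj_concat_replicate) auto
  then show ?thesis
    unfolding alternate_iff_distinct_adj by (simp add: filter_concat map_replicate_const)
qed

lemma alternate_if_count_list_le_1:
  assumes "count_list w x \<le> 1" "count_list w y \<le> 1"
  shows "alternate w x y"
proof -
  have "distinct (filter (\<lambda>z. z = x \<or> z = y) w)"
    using assms by (induction w) (auto simp: count_list_0_iff split: if_splits)
  then show ?thesis unfolding alternate_iff_distinct_adj by (rule distinct_adj_if_distinct)
qed

definition nonroots :: "nat \<Rightarrow> 'a \<Rightarrow> ('a \<times> nat) list" where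
  "nonroots n x = map (Pair x) [1..<n]"

definition copy_period :: "nat \<Rightarrow> 'a \<Rightarrow> ('a \<times> nat) list" where
  "copy_period n x = nonroots n x @ [(x, 0)]"

fun rp_word :: "nat \<Rightarrow> 'a set \<Rightarrow> 'a list \<Rightarrow> ('a \<times> nat) list" where
  "rp_word n S [] = []"
| "rp_word n S (x # xs) =
     (if x \<in> S then [] else nonroots n x) @ (x, 0) #
     (if x \<notin> S \<or> x \<in> set xs then nonroots n x else []) @ rp_word n (insert x S) xs"

lemma filter_fst_nonroots [simp]:
  "filter (\<lambda>z. fst z = u) (nonroots n x) = (if x = u then nonroots n x else [])"
  by (simp add: nonroots_def filter_map comp_def)

lemma length_nonroots [simp]: "length (nonroots n x) = n - 1"
  by (simp add: nonroots_def)

lemma distinct_copy_period: "distinct (copy_period n x)"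
  by (auto simp: copy_period_def nonroots_def distinct_map inj_on_def)

lemma set_copy_period: "1 \<le> n \<Longrightarrow> set (copy_period n x) = {x} \<times> {0..<n}"
  by (auto simp: copy_period_def nonroots_def)

lemma length_copy_period: "1 \<le> n \<Longrightarrow> length (copy_period n x) = n"
  by (simp add: copy_period_def)

lemma set_rp_word_subset: "1 \<le> n \<Longrightarrow> set (rp_word n S w) \<subseteq> set w \<times> {0..<n}"
  by (induction w arbitrary: S) (auto simp: nonroots_def)

lemma filter_rp_word_roots: "filter (\<lambda>z. snd z = 0) (rp_word n S w) = map (\<lambda>x. (x, 0)) w"
  by (induction w arbitrary: S) (auto simp: nonroots_def filter_map comp_def)

lemma filter_rp_word_seen_copy:
  assumes "u \<in> S"
  shows "filter (\<lambda>z. fst z = u) (rp_word n S w) =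
    (case count_list w u of 0 \<Rightarrow> [] | Suc k \<Rightarrow> (u, 0) # concat (replicate k (copy_period n u)))"
  using assms
proof (induction w arbitrary: S)
  case (Cons x xs)
  then show ?case
    by (cases "count_list xs u") (auto simp: insert_absorb copy_period_def count_list_0_iff)
qed simp

lemma filter_rp_word_copy:
  assumes "u \<notin> S"
  shows "filter (\<lambda>z. fst z = u) (rp_word n S w) =
    (if count_list w u = 1 then copy_period n u @ nonroots n u
     else concat (replicate (count_list w u) (copy_period n u)))"
  using assms
proof (induction w arbitrary: S)
  case (Cons x xs)
  show ?case
  proof (cases "x = u")
    case True
    then show ?thesis
      using filter_rp_word_seen_copy[of u "insert u S" n xs] Cons.prems
      by (cases "count_list xs u") (auto simp: copy_period_def count_list_0_iff)
  next
    case False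
    then show ?thesis using Cons by auto
  qed
qed simp

lemma rp_word_first_occurrence:
  assumes "u \<in> set w" "u \<notin> S"
  shows "\<exists>A B. rp_word n S w = A @ nonroots n u @ (u, 0) # nonroots n u @ B"
  using assms
proof (induction w arbitrary: S)
  case (Cons x xs)
  show ?case
  proof (cases "x = u")
    case True
    with Cons.prems have "rp_word n S (x # xs) =
        [] @ nonroots n u @ (u, 0) # nonroots n u @ rp_word n (insert u S) xs"
      by simp
    then show ?thesis by blast
  next
    case False
    then obtain A B where AB: "rp_word n (insert x S) xs = A @ nonroots n u @ (u, 0) # nonroots n u @ B"
      using Cons.IH[of "insert x S"] Cons.prems by auto
    define block where "block = (if x \<in> S then [] else nonroots n x) @ (x, 0) #
      (if x \<notin> S \<or> x \<in> set xs then nonroots n x else [])"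
    have "rp_word n S (x # xs) = (block @ A) @ nonroots n u @ (u, 0) # nonroots n u @ B"
      by (simp add: AB block_def)
    then show ?thesis by blast
  qed
qed simp

lemma set_rp_word:
  assumes "1 \<le> n"
  shows "set (rp_word n {} w) = set w \<times> {0..<n}"
proof
  show "set w \<times> {0..<n} \<subseteq> set (rp_word n {} w)"
  proof clarify
    fix u i assume "u \<in> set w" "i \<in> {0..<n}"
    then obtain A B where AB: "rp_word n {} w = A @ nonroots n u @ (u, 0) # nonroots n u @ B"
      using rp_word_first_occurrence[of u w "{}" n] by blast
    have "(u, i) \<in> set (copy_period n u)"
      using assms \<open>i \<in> {0..<n}\<close> by (simp add: set_copy_period)
    then show "(u, i) \<in> set (rp_word n {} w)"
      unfolding AB by (auto simp: copy_period_def)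
  qed
qed (rule set_rp_word_subset[OF assms])

lemma length_eq_sum_length_filter:
  assumes "finite U" "f ` set xs \<subseteq> U"
  shows "length xs = (\<Sum>u\<in>U. length (filter (\<lambda>z. f z = u) xs))"
  using assms(2)
proof (induction xs)
  case (Cons x xs)
  have "(\<Sum>u\<in>U. length (filter (\<lambda>z. f z = u) (x # xs)))
      = (\<Sum>u\<in>U. (if f x = u then 1 else 0) + length (filter (\<lambda>z. f z = u) xs))"
    by (rule sum.cong) auto
  with Cons assms(1) show ?case by (simp add: sum.distrib)
qed simp

lemma length_rp_word:
  assumes "1 \<le> n"
  shows "length (rp_word n {} w) = n * length w + (n - 1) * card {x \<in> set w. count_list w x = 1}"
proof -
  have "length (rp_word n {} w) = (\<Sum>u\<in>set w. length (filter (\<lambda>z. fst z = u) (rp_word n {} w)))"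
    using set_rp_word_subset[OF assms, of "{}" w] by (intro length_eq_sum_length_filter) force+
  also have "\<dots> = (\<Sum>u\<in>set w. n * count_list w u + (if count_list w u = 1 then n - 1 else 0))"
    using assms
    by (intro sum.cong) (auto simp: filter_rp_word_copy length_copy_period length_concat sum_list_replicate)
  also have "\<dots> = n * length w + (n - 1) * card {x \<in> set w. count_list w x = 1}"
    by (simp add: sum.distrib sum_count_set flip: sum_distrib_left sum.inter_filter)
  finally show ?thesis .
qed

lemma alternate_rp_word_same_copy:
  assumes "u \<in> set w" "i < n" "j < n" "i \<noteq> j"
  shows "alternate (rp_word n {} w) (u, i) (u, j)"
proof -
  let ?P = "copy_period n u" and ?c = "count_list w u"
  have "alternate (concat (replicate (Suc ?c) ?P)) (u, i) (u, j)"
    using assms by (intro alternate_concat_replicate) (auto simp: distinct_copy_period set_copy_period)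
  moreover have "\<exists>t. filter (\<lambda>z. fst z = u) (rp_word n {} w) @ t = concat (replicate (Suc ?c) ?P)"
    by (auto simp: filter_rp_word_copy copy_period_def replicate_append_same[symmetric] numeral_2_eq_2)
  ultimately have "alternate (filter (\<lambda>z. fst z = u) (rp_word n {} w)) (u, i) (u, j)"
    using alternate_appendD1 by metis
  then show ?thesis by (simp add: alternate_filter)
qed

lemma not_alternate_rp_word_other_copy:
  assumes "u \<in> set w" "0 < i" "i < n" "fst y \<noteq> u"
  shows "\<not> alternate (rp_word n {} w) (u, i) y"
proof -
  obtain A B where AB: "rp_word n {} w = A @ nonroots n u @ (u, 0) # nonroots n u @ B"
    using rp_word_first_occurrence[OF assms(1), of "{}" n] by blast
  have "(u, i) \<in> set (nonroots n u)" using assms(2,3) by (auto simp: nonroots_def)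
  then obtain L1 L2 where L: "nonroots n u = L1 @ (u, i) # L2" by (meson split_list)
  have "\<forall>z \<in> set (nonroots n u). fst z = u"
    by (auto simp: nonroots_def)
  then have "\<forall>z \<in> set (L2 @ (u, 0) # L1). fst z = u"
    unfolding L by auto
  then have "y \<notin> set (L2 @ (u, 0) # L1)"
    using assms(4) by blast
  then have "\<not> alternate ((A @ L1) @ (u, i) # (L2 @ (u, 0) # L1) @ (u, i) # L2 @ B) (u, i) y"
    using assms(4) by (intro not_alternate_if_none_between) auto
  then show ?thesis unfolding AB L by simp
qed

lemma alternate_rp_word_roots: "alternate (rp_word n S w) (u, 0) (v, 0) \<longleftrightarrow> alternate w u v"
proof -
  have "alternate (rp_word n S w) (u, 0) (v, 0) \<longleftrightarrow>
      alternate (map (\<lambda>x. (x, 0::nat)) w) (u, 0) (v, 0)"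
    using alternate_filter[of "\<lambda>z. snd z = 0" "(u, 0)" "(v, 0)" "rp_word n S w"]
    by (simp add: filter_rp_word_roots)
  also have "\<dots> \<longleftrightarrow> alternate w u v"
    by (rule alternate_map) (simp add: inj_def)
  finally show ?thesis .
qed

lemma represents_rooted_product:
  assumes "represents V E w" "1 \<le> n"
  shows "represents (rp_verts V n) (rp_edge E) (rp_word n {} w)"
  unfolding represents_def
proof (intro conjI ballI impI)
  have V: "set w = V" using assms(1) by (simp add: represents_def)
  then show "set (rp_word n {} w) = rp_verts V n"
    using set_rp_word[OF assms(2), of w] by (simp add: rp_verts_def)
  fix p q assume "p \<in> rp_verts V n" "q \<in> rp_verts V n" "p \<noteq> q"
  moreover obtain u i v j where "p = (u, i)" "q = (v, j)" by fastforce
  ultimately have pq: "p = (u, i)" "q = (v, j)" "u \<in> V" "v \<in> V" "i < n" "j < n" "p \<noteq> q"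
    by (auto simp: rp_verts_def)
  consider "u = v" | "u \<noteq> v" "i = 0" "j = 0" | "u \<noteq> v" "0 < i" | "u \<noteq> v" "0 < j"
    by blast
  then show "rp_edge E p q \<longleftrightarrow> alternate (rp_word n {} w) p q"
  proof cases
    case 1
    then show ?thesis using pq V alternate_rp_word_same_copy by (auto simp: rp_edge_def)
  next
    case 2
    then show ?thesis using pq V assms(1) by (auto simp: rp_edge_def alternate_rp_word_roots represents_def)
  next
    case 3
    then show ?thesis using pq V not_alternate_rp_word_other_copy[of u w i n q] by (auto simp: rp_edge_def)
  next
    case 4
    then show ?thesis
      using pq V not_alternate_rp_word_other_copy[of v w j n p] alternate_commute[of _ p q]
      by (auto simp: rp_edge_def)
  qed
qed

lemma min_rep_length_le: "represents V E w \<Longrightarrow> min_rep_length V E \<le> length w"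
  unfolding min_rep_length_def by (rule Least_le) blast

lemma min_rep_length_attained:
  assumes "word_representable V E"
  obtains w where "represents V E w" "length w = min_rep_length V E"
  using assms LeastI_ex[of "\<lambda>k. \<exists>w. represents V E w \<and> length w = k"]
  unfolding word_representable_def min_rep_length_def by blast

lemma card_le_clique_number:
  assumes "finite V" "is_clique V E C"
  shows "card C \<le> clique_number V E"
proof -
  have "{C. is_clique V E C} \<subseteq> Pow V" by (auto simp: is_clique_def)
  then have "finite {C. is_clique V E C}"
    using assms(1) by (meson finite_Pow_iff finite_subset)
  then show ?thesis unfolding clique_number_def using assms(2) by (intro Max_ge) auto
qed

lemma is_clique_letters_occurring_once:
  assumes "represents V E w"
  shows "is_clique V E {x \<in> set w. count_list w x = 1}"
  unfolding is_clique_def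
proof (intro conjI ballI impI)
  show "{x \<in> set w. count_list w x = 1} \<subseteq> V"
    using assms by (auto simp: represents_def)
  fix x y
  assume "x \<in> {x \<in> set w. count_list w x = 1}" "y \<in> {x \<in> set w. count_list w x = 1}" "x \<noteq> y"
  then show "E x y"
    using assms alternate_if_count_list_le_1[of w x y] by (auto simp: represents_def)
qed

theorem mainTheorem10:
  fixes V :: "'a set" and E :: "'a \<Rightarrow> 'a \<Rightarrow> bool" and n :: nat
  assumes "simple_graph V E" and "word_representable V E" and "n \<ge> 2"
  shows "word_representable (rp_verts V n) (rp_edge E) \<and>
         min_rep_length (rp_verts V n) (rp_edge E)
           \<le> n * min_rep_length V E + (n - 1) * clique_number V E"
proof -
  obtain w where w: "represents V E w" "length w = min_rep_length V E"
    using assms(2) by (rule min_rep_length_attained)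
  have "finite V" using assms(1) by (simp add: simple_graph_def)
  let ?W = "rp_word n {} w"
  have rep: "represents (rp_verts V n) (rp_edge E) ?W"
    using w(1) assms(3) by (intro represents_rooted_product) auto
  have "card {x \<in> set w. count_list w x = 1} \<le> clique_number V E"
    using \<open>finite V\<close> is_clique_letters_occurring_once[OF w(1)] by (rule card_le_clique_number)
  then have "length ?W \<le> n * min_rep_length V E + (n - 1) * clique_number V E"
    using length_rp_word[of n w] assms(3) w(2) by simp
  then show ?thesis
    using rep min_rep_length_le[OF rep] by (auto simp: word_representable_def)
qed

end
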